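(* For every $z\in\mathbb C$ with $\operatorname{Im}z\ne0$, the Hermitian matrix $\dfrac{K(z)-K^*(z)}{z-\bar z}$ is negative semidefinite, where $K^*=\overline{K^T}$; and for every real $x>0$, $K(x)$ is positive semidefinite.
   Context: Let $n\in\{2,3\}$, $Q=(0,1)^n$, $Q_2$ open with $\overline{Q_2}\subset Q$, $Q_1=Q\setminus\overline{Q_2}$, $\Gamma=\partial Q_2$, $\mathbf n$ outward unit normal of $Q_2$, $\chi_m$ characteristic function of $Q_m$. Standing assumptions: $Q_1,Q_2$ have positive measure; the $Q$-periodic extensions of $Q_1,Q_2$ are open with $C^1$ boundary, locally on one side of their boundaries, the periodic extension of $Q_1$ is connected; $Q_1$ connected with Lipschitz boundary. $\mu_1>0$; functions complex-valued; $e(\mathbf u)=\frac12(\nabla\mathbf u+\nabla\mathbf u^T)$, $A:B=\sum A_{ij}B_{ij}$. $\mathcal R(Q_2)$: rigid displacements $\mathbf y\mapsto A\mathbf y+\mathbf b$ ($A$ skew). $H(Q)$ = all $\mathbf v\in H^1(Q_1\cup Q_2)^n$ with $\operatorname{div}\mathbf v=0$, $\mathbf v\cdot\mathbf n=0$ on $\Gamma$, no jump across $\Gamma$, $(\mathbf v,\boldsymbol\eta)_{H^1(Q_2)}=0$ for all $\boldsymbol\eta\in\mathcal R(Q_2)$, $Q$-periodic. For $z\in\mathbb C\setminus(-\infty,0]$ and $j=1,\dots,n$, $\mathbf u^j(\cdot;z)$ is the unique $\mathbf u\in H(Q)$ with $\int_Q2\mu(\mathbf y;z)e(\mathbf u):\overline{e(\mathbf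 v)}d\mathbf y=\int_Q\mathbf e_j\cdot\overline{\mathbf v}d\mathbf y$ for all $\mathbf v\in H(Q)$, where $\mu(\mathbf y;z)=\mu_1\chi_1(\mathbf y)+z\mu_1\chi_2(\mathbf y)$ (weak form of the two-fluid Stokes cell problem with host viscosity $\mu_1$ and inclusion viscosity $z\mu_1$). The self-permeability is the $n\times n$ matrix $K(z)$ with $K_{ij}(z)=\int_Q\mathbf u^j(\mathbf y;z)\cdot\mathbf e_i\,d\mathbf y$. *)

theory Defs
  imports "HOL-Analysis.Analysis"
begin

text \<open>Points of the cell live in real^'n (n = CARD('n), assumed 2 or 3);
  complex vector fields are maps real^'n => complex^'n defined on all of R^n
  (representing their Q-periodic extension).\<close>

definition cellQ :: "(real^'n) set" where
  "cellQ = box 0 One"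

definition cellQ1 :: "(real^'n) set \<Rightarrow> (real^'n) set" where
  "cellQ1 Q2 = cellQ - closure Q2"

definition int_lattice :: "(real^'n) set" where
  "int_lattice = {k. \<forall>i. k $ i \<in> \<int>}"

text \<open>Q-periodic extension of Q2, and of Q1 (the complement of the periodic
  extension of the closure of Q2; this is the open set meant in the paper).\<close>
definition per_ext2 :: "(real^'n) set \<Rightarrow> (real^'n) set" where
  "per_ext2 Q2 = (\<Union>k\<in>int_lattice. (\<lambda>y. y + k) ` Q2)"

definition per_ext1 :: "(real^'n) set \<Rightarrow> (real^'n) set" where
  "per_ext1 Q2 = UNIV - (\<Union>k\<in>int_lattice. (\<lambda>y. y + k) ` closure Q2)"

definition C1_grad :: "(real^'n \<Rightarrow> real) \<Rightarrow> (real^'n \<Rightarrow> real^'n) \<Rightarrow> bool" where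
  "C1_grad \<phi> G \<longleftrightarrow> (\<forall>x. (\<phi> has_derivative (\<lambda>h. G x \<bullet> h)) (at x)) \<and> continuous_on UNIV G"

text \<open>Open set with C^1 boundary lying locally on one side of its boundary:
  near each boundary point it is the subgraph of a C^1 function in a suitable
  orthonormal coordinate system (last axis d).\<close>
definition C1_boundary :: "(real^'n) set \<Rightarrow> bool" where
  "C1_boundary S \<longleftrightarrow> (\<forall>p\<in>frontier S. \<exists>U d g G. open U \<and> p \<in> U \<and> norm d = 1 \<and> C1_grad g G \<and>
      S \<inter> U = {x\<in>U. x \<bullet> d < g (x - (x \<bullet> d) *\<^sub>R d)})"

definition Lipschitz_boundary :: "(real^'n) set \<Rightarrow> bool" where
  "Lipschitz_boundary S \<longleftrightarrow> (\<forall>p\<in>frontier S. \<exists>U d g L. open U \<and> p \<in> U \<and> norm d = 1 \<and>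
      L-lipschitz_on UNIV g \<and>
      S \<inter> U = {x\<in>U. x \<bullet> d < g (x - (x \<bullet> d) *\<^sub>R d)})"

definition L2 :: "(real^'n) set \<Rightarrow> (real^'n \<Rightarrow> complex) \<Rightarrow> bool" where
  "L2 U f \<longleftrightarrow> f \<in> borel_measurable (lebesgue_on U) \<and>
     integrable (lebesgue_on U) (\<lambda>x. (cmod (f x))\<^sup>2)"

definition test_fun :: "(real^'n) set \<Rightarrow> (real^'n \<Rightarrow> real) \<Rightarrow> (real^'n \<Rightarrow> real^'n) \<Rightarrow> bool" where
  "test_fun U \<phi> G \<longleftrightarrow> C1_grad \<phi> G \<and> compact (closure {x. \<phi> x \<noteq> 0}) \<and> closure {x. \<phi> x \<noteq> 0} \<subseteq> U"

definition weak_partial :: "(real^'n) set \<Rightarrow> (real^'n \<Rightarrow> complex) \<Rightarrow> 'n \<Rightarrow> (real^'n \<Rightarrow> complex) \<Rightarrow> bool" where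
  "weak_partial U f i g \<longleftrightarrow> (\<forall>\<phi> G. test_fun U \<phi> G \<longrightarrow>
     (LINT x|lebesgue_on U. f x * complex_of_real (G x $ i)) =
       - (LINT x|lebesgue_on U. g x * complex_of_real (\<phi> x)))"

definition H1 :: "(real^'n) set \<Rightarrow> (real^'n \<Rightarrow> complex) \<Rightarrow> bool" where
  "H1 U f \<longleftrightarrow> L2 U f \<and> (\<forall>i. \<exists>g. L2 U g \<and> weak_partial U f i g)"

text \<open>The weak derivative (determined almost everywhere on U).\<close>
definition wd :: "(real^'n) set \<Rightarrow> (real^'n \<Rightarrow> complex) \<Rightarrow> 'n \<Rightarrow> real^'n \<Rightarrow> complex" where
  "wd U f i = (SOME g. L2 U g \<and> weak_partial U f i g)"

definition H1v :: "(real^'n) set \<Rightarrow> (real^'n \<Rightarrow> complex^'n) \<Rightarrow> bool" where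
  "H1v U v \<longleftrightarrow> (\<forall>k. H1 U (\<lambda>x. v x $ k))"

definition vd :: "(real^'n) set \<Rightarrow> (real^'n \<Rightarrow> complex^'n) \<Rightarrow> 'n \<Rightarrow> 'n \<Rightarrow> real^'n \<Rightarrow> complex" where
  "vd U v k i = wd U (\<lambda>x. v x $ k) i"

definition strain :: "(real^'n) set \<Rightarrow> (real^'n \<Rightarrow> complex^'n) \<Rightarrow> 'n \<Rightarrow> 'n \<Rightarrow> real^'n \<Rightarrow> complex" where
  "strain U v k i x = (vd U v k i x + vd U v i k x) / 2"

definition H1_inner :: "(real^'n) set \<Rightarrow> (real^'n \<Rightarrow> complex^'n) \<Rightarrow> (real^'n \<Rightarrow> complex^'n) \<Rightarrow> complex" where
  "H1_inner U v w = (LINT x|lebesgue_on U.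
      (\<Sum>k\<in>UNIV. v x $ k * cnj (w x $ k)) +
      (\<Sum>k\<in>UNIV. \<Sum>i\<in>UNIV. vd U v k i x * cnj (vd U w k i x)))"

definition rigid_disp :: "(real^'n \<Rightarrow> complex^'n) \<Rightarrow> bool" where
  "rigid_disp \<eta> \<longleftrightarrow> (\<exists>(A::real^'n^'n) b. (\<forall>i j. A $ i $ j = - A $ j $ i) \<and>
      (\<forall>y. \<eta> y = (\<chi> i. complex_of_real ((A *v y + b) $ i))))"

definition Q_periodic :: "(real^'n \<Rightarrow> complex^'n) \<Rightarrow> bool" where
  "Q_periodic v \<longleftrightarrow> (\<forall>y k. v (y + axis k 1) = v y)"

definition Hspace :: "(real^'n) set \<Rightarrow> (real^'n \<Rightarrow> complex^'n) \<Rightarrow> bool" where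
  "Hspace Q2 v \<longleftrightarrow>
     \<comment> \<open>v in H^1(Q1 \<union> Q2)^n\<close>
     H1v (cellQ1 Q2 \<union> Q2) v \<and>
     \<comment> \<open>div v = 0 (in Q1 \<union> Q2)\<close>
     (AE x in lebesgue_on (cellQ1 Q2 \<union> Q2). (\<Sum>i\<in>UNIV. vd (cellQ1 Q2 \<union> Q2) v i i x) = 0) \<and>
     \<comment> \<open>v . n = 0 on Gamma (weak normal trace, Green's formula on Q2)\<close>
     (\<forall>\<phi> G. C1_grad \<phi> G \<longrightarrow>
        (LINT x|lebesgue_on Q2. (\<Sum>i\<in>UNIV. v x $ i * complex_of_real (G x $ i))) = 0) \<and>
     \<comment> \<open>no jump across Gamma\<close>
     H1v cellQ v \<and>
     \<comment> \<open>(v, eta)_{H^1(Q2)} = 0 for rigid eta\<close>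
     (\<forall>\<eta>. rigid_disp \<eta> \<longrightarrow> H1_inner Q2 v \<eta> = 0) \<and>
     \<comment> \<open>Q-periodic: v is periodic and its periodic extension is H^1_loc\<close>
     Q_periodic v \<and> (\<forall>B. bounded B \<and> open B \<longrightarrow> H1v B v)"

definition visc :: "real \<Rightarrow> (real^'n) set \<Rightarrow> complex \<Rightarrow> real^'n \<Rightarrow> complex" where
  "visc \<mu>1 Q2 z y = complex_of_real \<mu>1 * indicator (cellQ1 Q2) y + z * complex_of_real \<mu>1 * indicator Q2 y"

definition cell_form :: "real \<Rightarrow> (real^'n) set \<Rightarrow> complex \<Rightarrow> (real^'n \<Rightarrow> complex^'n) \<Rightarrow> (real^'n \<Rightarrow> complex^'n) \<Rightarrow> complex" where
  "cell_form \<mu>1 Q2 z u v = (LINT y|lebesgue_on cellQ.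
      2 * visc \<mu>1 Q2 z y *
      (\<Sum>k\<in>UNIV. \<Sum>i\<in>UNIV. strain (cellQ1 Q2 \<union> Q2) u k i y * cnj (strain (cellQ1 Q2 \<union> Q2) v k i y)))"

definition cell_sol :: "real \<Rightarrow> (real^'n) set \<Rightarrow> complex \<Rightarrow> 'n \<Rightarrow> (real^'n \<Rightarrow> complex^'n) \<Rightarrow> bool" where
  "cell_sol \<mu>1 Q2 z j u \<longleftrightarrow> Hspace Q2 u \<and>
     (\<forall>v. Hspace Q2 v \<longrightarrow> cell_form \<mu>1 Q2 z u v = (LINT y|lebesgue_on cellQ. cnj (v y $ j)))"

text \<open>u^j(.;z) (unique up to null sets, which do not affect K).\<close>
definition cell_u :: "real \<Rightarrow> (real^'n) set \<Rightarrow> complex \<Rightarrow> 'n \<Rightarrow> real^'n \<Rightarrow> complex^'n" where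
  "cell_u \<mu>1 Q2 z j = (SOME u. cell_sol \<mu>1 Q2 z j u)"

definition Kmat :: "real \<Rightarrow> (real^'n) set \<Rightarrow> complex \<Rightarrow> complex^'n^'n" where
  "Kmat \<mu>1 Q2 z = (\<chi> i j. LINT y|lebesgue_on cellQ. cell_u \<mu>1 Q2 z j y $ i)"

definition adjoint_mat :: "complex^'n^'n \<Rightarrow> complex^'n^'n" where
  "adjoint_mat M = (\<chi> i j. cnj (M $ j $ i))"

definition hermitian_mat :: "complex^'n^'n \<Rightarrow> bool" where
  "hermitian_mat M \<longleftrightarrow> adjoint_mat M = M"

definition quad_form :: "complex^'n^'n \<Rightarrow> complex^'n \<Rightarrow> complex" where
  "quad_form M \<xi> = (\<Sum>i\<in>UNIV. \<Sum>j\<in>UNIV. cnj (\<xi> $ i) * M $ i $ j * \<xi> $ j)"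

definition pos_semidef :: "complex^'n^'n \<Rightarrow> bool" where
  "pos_semidef M \<longleftrightarrow> hermitian_mat M \<and> (\<forall>\<xi>. 0 \<le> Re (quad_form M \<xi>))"

definition neg_semidef :: "complex^'n^'n \<Rightarrow> bool" where
  "neg_semidef M \<longleftrightarrow> hermitian_mat M \<and> (\<forall>\<xi>. Re (quad_form M \<xi>) \<le> 0)"

end

theory Submission
  imports Defs
begin

text \<open>Testing the cell problem for \<open>u\<^sup>i\<close> with \<open>v = u\<^sup>j\<close> gives
  \<open>cnj (K\<^sub>i\<^sub>j) = 2\<mu>\<^sub>1 (A\<^sub>j\<^sub>i + z B\<^sub>j\<^sub>i)\<close>, where \<open>A\<close> and \<open>B\<close> are the Gram matrices of the
  strains \<open>e(u\<^sup>1), \<dots>, e(u\<^sup>n)\<close> in \<open>L\<^sup>2(Q\<^sub>1)\<close> and \<open>L\<^sup>2(Q\<^sub>2)\<close>. Hence \<open>K(z) = 2\<mu>\<^sub>1 (A + cnj z B)\<close>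
  with \<open>A\<close>, \<open>B\<close> Hermitian positive semidefinite, so \<open>(K - K\<^sup>*)/(z - cnj z) = -2\<mu>\<^sub>1 B\<close> and
  \<open>K(x) = 2\<mu>\<^sub>1 (A + x B)\<close>.\<close>

definition square_integrable :: "'a measure \<Rightarrow> ('a \<Rightarrow> complex) \<Rightarrow> bool" where
  "square_integrable M f \<longleftrightarrow> f \<in> borel_measurable M \<and> integrable M (\<lambda>x. (cmod (f x))\<^sup>2)"

lemma L2_iff_square_integrable: "L2 U f \<longleftrightarrow> square_integrable (lebesgue_on U) f"
  unfolding L2_def square_integrable_def ..

lemma square_integrable_add:
  assumes f: "square_integrable M f" and g: "square_integrable M g"
  shows "square_integrable M (\<lambda>x. f x + g x)"
proof -
  have meas: "(\<lambda>x. f x + g x) \<in> borel_measurable M"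
    using f g unfolding square_integrable_def by auto
  have "integrable M (\<lambda>x. (cmod (f x + g x))\<^sup>2)"
  proof (rule Bochner_Integration.integrable_bound)
    show "integrable M (\<lambda>x. 2 * (cmod (f x))\<^sup>2 + 2 * (cmod (g x))\<^sup>2)"
      using f g unfolding square_integrable_def by auto
    show "(\<lambda>x. (cmod (f x + g x))\<^sup>2) \<in> borel_measurable M"
      using meas by measurable
    show "AE x in M. norm ((cmod (f x + g x))\<^sup>2) \<le> norm (2 * (cmod (f x))\<^sup>2 + 2 * (cmod (g x))\<^sup>2)"
    proof (rule AE_I2)
      fix x
      have "(cmod (f x + g x))\<^sup>2 \<le> (cmod (f x) + cmod (g x))\<^sup>2"
        by (simp add: power_mono norm_triangle_ineq)
      also have "\<dots> \<le> 2 * (cmod (f x))\<^sup>2 + 2 * (cmod (g x))\<^sup>2"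
        using zero_le_power2[of "cmod (f x) - cmod (g x)"] by (simp add: power2_eq_square algebra_simps)
      finally show "norm ((cmod (f x + g x))\<^sup>2) \<le> norm (2 * (cmod (f x))\<^sup>2 + 2 * (cmod (g x))\<^sup>2)"
        by simp
    qed
  qed
  with meas show ?thesis unfolding square_integrable_def by simp
qed

lemma square_integrable_cmult:
  assumes f: "square_integrable M f" shows "square_integrable M (\<lambda>x. c * f x)"
proof -
  have "f \<in> borel_measurable M" using f unfolding square_integrable_def ..
  then have "(\<lambda>x. c * f x) \<in> borel_measurable M" by measurable
  moreover have "integrable M (\<lambda>x. (cmod c)\<^sup>2 * (cmod (f x))\<^sup>2)"
    using f unfolding square_integrable_def by simp
  ultimately show ?thesis
    unfolding square_integrable_def by (simp add: norm_mult power_mult_distrib)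
qed

lemma square_integrable_cnj:
  assumes "square_integrable M f" shows "square_integrable M (\<lambda>x. cnj (f x))"
  using assms unfolding square_integrable_def
  by (auto intro: borel_measurable_continuous_on[OF continuous_on_cnj[OF continuous_on_id]])

lemma integrable_mult_square_integrable:
  assumes f: "square_integrable M f" and g: "square_integrable M g"
  shows "integrable M (\<lambda>x. f x * g x)"
proof (rule Bochner_Integration.integrable_bound)
  show "integrable M (\<lambda>x. (cmod (f x))\<^sup>2 + (cmod (g x))\<^sup>2)"
    using f g unfolding square_integrable_def by auto
  show "(\<lambda>x. f x * g x) \<in> borel_measurable M"
    using f g unfolding square_integrable_def by auto
  show "AE x in M. norm (f x * g x) \<le> norm ((cmod (f x))\<^sup>2 + (cmod (g x))\<^sup>2)"
  proof (rule AE_I2)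
    fix x
    have "2 * (cmod (f x) * cmod (g x)) \<le> (cmod (f x))\<^sup>2 + (cmod (g x))\<^sup>2"
      using zero_le_power2[of "cmod (f x) - cmod (g x)"] by (simp add: power2_eq_square algebra_simps)
    moreover have "0 \<le> cmod (f x) * cmod (g x)" by simp
    ultimately have "cmod (f x) * cmod (g x) \<le> (cmod (f x))\<^sup>2 + (cmod (g x))\<^sup>2" by linarith
    then show "norm (f x * g x) \<le> norm ((cmod (f x))\<^sup>2 + (cmod (g x))\<^sup>2)"
      by (simp add: norm_mult)
  qed
qed

lemma square_integrable_restrict_space:
  assumes f: "square_integrable M f" and S: "S \<in> sets M"
  shows "square_integrable (restrict_space M S) f"
proof -
  have "integrable M (\<lambda>x. indicator S x *\<^sub>R (cmod (f x))\<^sup>2)"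
    using f S unfolding square_integrable_def by (intro integrable_mult_indicator) auto
  with f S show ?thesis
    unfolding square_integrable_def by (simp add: integrable_restrict_space measurable_restrict_space1)
qed

lemma square_integrable_lebesgue_on_subset:
  assumes f: "square_integrable (lebesgue_on U) f"
    and U: "U \<in> sets lebesgue" and S: "S \<in> sets lebesgue" "S \<subseteq> U"
  shows "square_integrable (lebesgue_on S) f"
proof -
  have "lebesgue_on S = restrict_space (lebesgue_on U) S"
    using U S by (simp add: restrict_restrict_space Int_absorb1)
  moreover have "S \<in> sets (lebesgue_on U)"
    using U S by (simp add: sets_restrict_space_iff Int_absorb1)
  ultimately show ?thesis using square_integrable_restrict_space[OF f] by simp
qed

lemma sum_sum_quadratic_eq_sum_norm_square:
  fixes \<xi> :: "'n::finite \<Rightarrow> complex" and f :: "'n \<Rightarrow> 'k::finite \<Rightarrow> complex"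
  shows "(\<Sum>i\<in>UNIV. \<Sum>j\<in>UNIV. cnj (\<xi> i) * (\<Sum>k\<in>UNIV. f j k * cnj (f i k)) * \<xi> j)
       = (\<Sum>k\<in>UNIV. complex_of_real ((cmod (\<Sum>j\<in>UNIV. \<xi> j * f j k))\<^sup>2))"
proof -
  have "(\<Sum>i\<in>UNIV. \<Sum>j\<in>UNIV. cnj (\<xi> i) * (\<Sum>k\<in>UNIV. f j k * cnj (f i k)) * \<xi> j)
      = (\<Sum>i\<in>UNIV. \<Sum>j\<in>UNIV. \<Sum>k\<in>UNIV. \<xi> j * f j k * cnj (\<xi> i * f i k))"
    by (simp add: sum_distrib_left sum_distrib_right mult_ac)
  also have "\<dots> = (\<Sum>k\<in>UNIV. \<Sum>i\<in>UNIV. \<Sum>j\<in>UNIV. \<xi> j * f j k * cnj (\<xi> i * f i k))"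
    by (simp add: sum.swap[where A = UNIV and B = "UNIV :: 'k set"])
  also have "\<dots> = (\<Sum>k\<in>UNIV. complex_of_real ((cmod (\<Sum>j\<in>UNIV. \<xi> j * f j k))\<^sup>2))"
    unfolding complex_norm_square by (simp add: sum_distrib_left sum_distrib_right mult_ac)
  finally show ?thesis .
qed

definition gram_mat :: "'a measure \<Rightarrow> ('n::finite \<Rightarrow> 'k::finite \<Rightarrow> 'a \<Rightarrow> complex) \<Rightarrow> complex^'n^'n" where
  "gram_mat M f = (\<chi> i j. LINT x|M. (\<Sum>k\<in>UNIV. f j k x * cnj (f i k x)))"

lemma hermitian_gram_mat: "hermitian_mat (gram_mat M f)"
  unfolding hermitian_mat_def adjoint_mat_def gram_mat_def
  by (simp add: vec_eq_iff mult.commute flip: Bochner_Integration.integral_cnj)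

lemma quad_form_gram_mat:
  assumes f: "\<And>j k. square_integrable M (f j k)"
  shows "quad_form (gram_mat M f) \<xi> = of_real (LINT x|M. (\<Sum>k\<in>UNIV. (cmod (\<Sum>j\<in>UNIV. \<xi> $ j * f j k x))\<^sup>2))"
proof -
  have int: "integrable M (\<lambda>x. cnj (\<xi> $ i) * (\<Sum>k\<in>UNIV. f j k x * cnj (f i k x)) * \<xi> $ j)" for i j
    by (intro integrable_mult_left integrable_mult_right Bochner_Integration.integrable_sum
        integrable_mult_square_integrable square_integrable_cnj f)
  have "quad_form (gram_mat M f) \<xi>
      = (LINT x|M. (\<Sum>i\<in>UNIV. \<Sum>j\<in>UNIV. cnj (\<xi> $ i) * (\<Sum>k\<in>UNIV. f j k x * cnj (f i k x)) * \<xi> $ j))"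
    unfolding quad_form_def gram_mat_def
    by (simp add: int Bochner_Integration.integral_sum)
  also have "\<dots> = (LINT x|M. of_real (\<Sum>k\<in>UNIV. (cmod (\<Sum>j\<in>UNIV. \<xi> $ j * f j k x))\<^sup>2))"
    by (simp only: sum_sum_quadratic_eq_sum_norm_square of_real_sum)
  finally show ?thesis by (simp only: integral_complex_of_real)
qed

lemma pos_semidef_gram_mat:
  assumes "\<And>j k. square_integrable M (f j k)"
  shows "pos_semidef (gram_mat M f)"
  unfolding pos_semidef_def quad_form_gram_mat[OF assms]
  by (auto simp: hermitian_gram_mat intro!: Bochner_Integration.integral_nonneg sum_nonneg)

lemma hermitian_matD: "hermitian_mat A \<Longrightarrow> cnj (A $ j $ i) = A $ i $ j"
  unfolding hermitian_mat_def adjoint_mat_def by (metis vec_lambda_beta)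

lemma quad_form_lincomb:
  "quad_form (\<chi> i j. a * A $ i $ j + b * B $ i $ j) \<xi> = a * quad_form A \<xi> + b * quad_form B \<xi>"
  unfolding quad_form_def by (simp add: algebra_simps sum.distrib sum_distrib_left)

lemma pos_semidef_lincomb:
  assumes A: "pos_semidef A" and B: "pos_semidef B" and "0 \<le> a" "0 \<le> b"
  shows "pos_semidef (\<chi> i j. of_real a * A $ i $ j + of_real b * B $ i $ j)"
  unfolding pos_semidef_def quad_form_lincomb
proof (intro conjI allI)
  have "cnj (A $ j $ i) = A $ i $ j" "cnj (B $ j $ i) = B $ i $ j" for i j
    using A B unfolding pos_semidef_def by (simp_all add: hermitian_matD)
  then show "hermitian_mat (\<chi> i j. of_real a * A $ i $ j + of_real b * B $ i $ j)"
    by (simp add: hermitian_mat_def adjoint_mat_def vec_eq_iff)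
  show "0 \<le> Re (of_real a * quad_form A \<xi> + of_real b * quad_form B \<xi>)" for \<xi>
    using A B \<open>0 \<le> a\<close> \<open>0 \<le> b\<close> unfolding pos_semidef_def by simp
qed

lemma neg_semidef_neg_mult:
  assumes B: "pos_semidef B" and c: "0 \<le> c"
  shows "neg_semidef (\<chi> i j. - of_real c * B $ i $ j)"
  unfolding neg_semidef_def
proof (intro conjI allI)
  have "cnj (B $ j $ i) = B $ i $ j" for i j
    using B unfolding pos_semidef_def by (simp add: hermitian_matD)
  then show "hermitian_mat (\<chi> i j. - of_real c * B $ i $ j)"
    by (simp add: hermitian_mat_def adjoint_mat_def vec_eq_iff)
  fix \<xi>
  have "quad_form (\<chi> i j. - of_real c * B $ i $ j) \<xi> = - of_real c * quad_form B \<xi>"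
    unfolding quad_form_def by (simp add: sum_distrib_left mult_ac)
  then show "Re (quad_form (\<chi> i j. - of_real c * B $ i $ j) \<xi>) \<le> 0"
    using B c unfolding pos_semidef_def by simp
qed

lemma adjoint_difference_quotient:
  fixes c :: real
  assumes A: "hermitian_mat A" and B: "hermitian_mat B" and z: "Im z \<noteq> 0"
  defines "K \<equiv> \<chi> i j. of_real c * (A $ i $ j + cnj z * B $ i $ j)"
  shows "(\<chi> i j. (K $ i $ j - adjoint_mat K $ i $ j) / (z - cnj z)) = (\<chi> i j. - of_real c * B $ i $ j)"
proof -
  have "z - cnj z \<noteq> 0" using z by (simp add: complex_eq_iff)
  moreover have "adjoint_mat K $ i $ j = of_real c * (A $ i $ j + z * B $ i $ j)" for i j
    unfolding K_def adjoint_mat_def using hermitian_matD[OF A] hermitian_matD[OF B] by simp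
  ultimately show ?thesis
    unfolding K_def by (simp add: vec_eq_iff field_simps)
qed

lemma open_sets_lebesgue: "open S \<Longrightarrow> S \<in> sets lebesgue"
  by (simp add: borel_open)

lemma open_cellQ1: "open (cellQ1 Q2)"
  unfolding cellQ1_def cellQ_def by auto

lemma square_integrable_vd:
  assumes "H1v U v" shows "square_integrable (lebesgue_on U) (vd U v k i)"
proof -
  have "\<exists>g. L2 U g \<and> weak_partial U (\<lambda>x. v x $ k) i g"
    using assms unfolding H1v_def H1_def by blast
  from someI_ex[OF this] show ?thesis
    unfolding vd_def wd_def L2_iff_square_integrable by blast
qed

lemma square_integrable_strain:
  assumes "H1v U v" shows "square_integrable (lebesgue_on U) (strain U v k i)"
proof -
  have "strain U v k i = (\<lambda>x. (1/2) * (vd U v k i x + vd U v i k x))"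
    by (simp add: fun_eq_iff strain_def)
  then show ?thesis
    by (simp only:) (intro square_integrable_cmult square_integrable_add square_integrable_vd assms)
qed

lemma square_integrable_strain_on:
  assumes Q2: "open Q2" and u: "Hspace Q2 u"
    and S: "S \<in> sets lebesgue" "S \<subseteq> cellQ1 Q2 \<union> Q2"
  shows "square_integrable (lebesgue_on S) (strain (cellQ1 Q2 \<union> Q2) u k l)"
proof (rule square_integrable_lebesgue_on_subset[OF _ _ S])
  show "square_integrable (lebesgue_on (cellQ1 Q2 \<union> Q2)) (strain (cellQ1 Q2 \<union> Q2) u k l)"
    using u unfolding Hspace_def by (blast intro: square_integrable_strain)
  show "cellQ1 Q2 \<union> Q2 \<in> sets lebesgue"
    by (intro open_sets_lebesgue open_Un open_cellQ1 Q2)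
qed

definition strain_inner ::
    "(real^'n) set \<Rightarrow> (real^'n) set \<Rightarrow> (real^'n \<Rightarrow> complex^'n) \<Rightarrow> (real^'n \<Rightarrow> complex^'n) \<Rightarrow> complex" where
  "strain_inner Q2 S u v = (LINT y|lebesgue_on S.
      (\<Sum>k\<in>UNIV. \<Sum>l\<in>UNIV. strain (cellQ1 Q2 \<union> Q2) u k l y * cnj (strain (cellQ1 Q2 \<union> Q2) v k l y)))"

lemma cell_form_eq_strain_inner:
  fixes Q2 :: "(real^'n) set"
  assumes Q2: "open Q2" "closure Q2 \<subseteq> cellQ" and u: "Hspace Q2 u" and v: "Hspace Q2 v"
  shows "cell_form \<mu>1 Q2 z u v
    = of_real (2 * \<mu>1) * (strain_inner Q2 (cellQ1 Q2) u v + z * strain_inner Q2 Q2 u v)"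
proof -
  define g where "g y = (\<Sum>k\<in>UNIV. \<Sum>l\<in>UNIV.
      strain (cellQ1 Q2 \<union> Q2) u k l y * cnj (strain (cellQ1 Q2 \<union> Q2) v k l y))" for y
  have Q1_sets: "cellQ1 Q2 \<in> sets lebesgue" and Q2_sets: "Q2 \<in> sets lebesgue"
    and cellQ_sets: "(cellQ :: (real^'n) set) \<in> sets lebesgue"
    using Q2 unfolding cellQ_def by (auto intro!: open_sets_lebesgue open_cellQ1)
  have "integrable lebesgue (\<lambda>y. indicator S y *\<^sub>R g y)" if S: "S \<in> sets lebesgue" "S \<subseteq> cellQ1 Q2 \<union> Q2" for S
  proof -
    have "integrable (lebesgue_on S) g"
      unfolding g_def
      by (intro Bochner_Integration.integrable_sum integrable_mult_square_integrable square_integrable_cnj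
          square_integrable_strain_on Q2 u v S)
    then show ?thesis using S by (simp add: integrable_restrict_space)
  qed
  then have int1: "integrable lebesgue (\<lambda>y. indicator (cellQ1 Q2) y *\<^sub>R g y)"
    and int2: "integrable lebesgue (\<lambda>y. indicator Q2 y *\<^sub>R g y)"
    using Q1_sets Q2_sets by auto
  have Q2_sub: "Q2 \<subseteq> cellQ" using Q2 closure_subset by blast
  \<comment> \<open>No null-set argument for \<open>\<Gamma>\<close> is needed: the viscosity vanishes off \<open>Q\<^sub>1 \<union> Q\<^sub>2\<close>.\<close>
  have integrand_split: "indicator cellQ y *\<^sub>R (2 * visc \<mu>1 Q2 z y * g y)
      = of_real (2 * \<mu>1) * (indicator (cellQ1 Q2) y *\<^sub>R g y)
        + of_real (2 * \<mu>1) * z * (indicator Q2 y *\<^sub>R g y)" for y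
    using Q2_sub closure_subset[of Q2]
    by (auto simp: visc_def cellQ1_def indicator_def)
  have "cell_form \<mu>1 Q2 z u v = (LINT y|lebesgue. indicator cellQ y *\<^sub>R (2 * visc \<mu>1 Q2 z y * g y))"
    unfolding cell_form_def g_def using cellQ_sets by (simp add: integral_restrict_space)
  also have "\<dots> = of_real (2 * \<mu>1) * (LINT y|lebesgue. indicator (cellQ1 Q2) y *\<^sub>R g y)
      + of_real (2 * \<mu>1) * z * (LINT y|lebesgue. indicator Q2 y *\<^sub>R g y)"
    unfolding integrand_split
    by (simp only: Bochner_Integration.integral_add[OF integrable_mult_right[OF int1] integrable_mult_right[OF int2]]
        integral_mult_right_zero)
  also have "\<dots> = of_real (2 * \<mu>1) * (strain_inner Q2 (cellQ1 Q2) u v + z * strain_inner Q2 Q2 u v)"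
    unfolding strain_inner_def g_def[symmetric] using Q1_sets Q2_sets
    by (simp add: integral_restrict_space algebra_simps)
  finally show ?thesis .
qed

definition strain_gram ::
    "(real^'n) set \<Rightarrow> (real^'n) set \<Rightarrow> ('n \<Rightarrow> real^'n \<Rightarrow> complex^'n) \<Rightarrow> complex^'n^'n" where
  "strain_gram Q2 S u = gram_mat (lebesgue_on S) (\<lambda>j (k, l). strain (cellQ1 Q2 \<union> Q2) (u j) k l)"

lemma strain_gram_entry: "strain_gram Q2 S u $ i $ j = strain_inner Q2 S (u j) (u i)"
  unfolding strain_gram_def gram_mat_def strain_inner_def
  by (simp add: sum.cartesian_product case_prod_beta)

lemma pos_semidef_strain_gram:
  assumes "open Q2" "\<And>j. Hspace Q2 (u j)" "S \<in> sets lebesgue" "S \<subseteq> cellQ1 Q2 \<union> Q2"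
  shows "pos_semidef (strain_gram Q2 S u)"
  unfolding strain_gram_def
  by (rule pos_semidef_gram_mat) (simp add: square_integrable_strain_on assms split: prod.split)

lemma Kmat_eq_strain_gram:
  fixes Q2 :: "(real^'n) set"
  assumes Q2: "open Q2" "closure Q2 \<subseteq> cellQ"
    and sol: "\<And>j. cell_sol \<mu>1 Q2 z j (cell_u \<mu>1 Q2 z j)"
  defines "A \<equiv> strain_gram Q2 (cellQ1 Q2) (cell_u \<mu>1 Q2 z)"
    and "B \<equiv> strain_gram Q2 Q2 (cell_u \<mu>1 Q2 z)"
  shows "Kmat \<mu>1 Q2 z = (\<chi> i j. of_real (2 * \<mu>1) * (A $ i $ j + cnj z * B $ i $ j))"
proof -
  let ?u = "cell_u \<mu>1 Q2 z"
  have H: "Hspace Q2 (?u j)" for j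
    using sol unfolding cell_sol_def by blast
  have "Kmat \<mu>1 Q2 z $ i $ j = of_real (2 * \<mu>1) * (A $ i $ j + cnj z * B $ i $ j)" for i j
  proof -
    have "cnj (Kmat \<mu>1 Q2 z $ i $ j) = cell_form \<mu>1 Q2 z (?u i) (?u j)"
      using sol[of i] H[of j] unfolding cell_sol_def Kmat_def by simp
    also have "\<dots> = of_real (2 * \<mu>1) * (A $ j $ i + z * B $ j $ i)"
      unfolding A_def B_def strain_gram_entry by (rule cell_form_eq_strain_inner[OF Q2 H H])
    finally have "Kmat \<mu>1 Q2 z $ i $ j = cnj (of_real (2 * \<mu>1) * (A $ j $ i + z * B $ j $ i))"
      by (metis complex_cnj_cnj)
    moreover have "hermitian_mat A" "hermitian_mat B"
      unfolding A_def B_def strain_gram_def by (rule hermitian_gram_mat)+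
    ultimately show ?thesis by (simp add: hermitian_matD)
  qed
  then show ?thesis by (simp add: vec_eq_iff)
qed

lemma Kmat_decomposition:
  fixes Q2 :: "(real^'n) set"
  assumes Q2: "open Q2" "closure Q2 \<subseteq> cellQ"
    and solvable: "\<And>j. \<exists>u. cell_sol \<mu>1 Q2 z j u"
  obtains A B where "pos_semidef A" "pos_semidef B"
    "Kmat \<mu>1 Q2 z = (\<chi> i j. of_real (2 * \<mu>1) * (A $ i $ j + cnj z * B $ i $ j))"
proof
  have sol: "cell_sol \<mu>1 Q2 z j (cell_u \<mu>1 Q2 z j)" for j
    unfolding cell_u_def by (rule someI_ex[OF solvable])
  then have H: "Hspace Q2 (cell_u \<mu>1 Q2 z j)" for j
    unfolding cell_sol_def by blast
  have "Q2 \<in> sets lebesgue" "cellQ1 Q2 \<in> sets lebesgue"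
    using Q2(1) by (auto intro!: open_sets_lebesgue open_cellQ1)
  then show "pos_semidef (strain_gram Q2 (cellQ1 Q2) (cell_u \<mu>1 Q2 z))"
    "pos_semidef (strain_gram Q2 Q2 (cell_u \<mu>1 Q2 z))"
    by (auto intro!: pos_semidef_strain_gram Q2(1) H)
  show "Kmat \<mu>1 Q2 z = (\<chi> i j. of_real (2 * \<mu>1) *
      (strain_gram Q2 (cellQ1 Q2) (cell_u \<mu>1 Q2 z) $ i $ j + cnj z * strain_gram Q2 Q2 (cell_u \<mu>1 Q2 z) $ i $ j))"
    by (rule Kmat_eq_strain_gram[OF Q2 sol])
qed

theorem proposition1:
  fixes Q2 :: "(real^'n) set" and \<mu>1 :: real
  assumes dim: "CARD('n) \<in> {2, 3}"
    and Q2_open: "open Q2"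
    and Q2_closure: "closure Q2 \<subseteq> cellQ"
    and Q1_pos: "emeasure lebesgue (cellQ1 Q2) > 0"
    and Q2_pos: "emeasure lebesgue Q2 > 0"
    and per1_open: "open (per_ext1 Q2)"
    and per2_open: "open (per_ext2 Q2)"
    and per1_C1: "C1_boundary (per_ext1 Q2)"
    and per2_C1: "C1_boundary (per_ext2 Q2)"
    and per1_conn: "connected (per_ext1 Q2)"
    and Q1_conn: "connected (cellQ1 Q2)"
    and Q1_Lip: "Lipschitz_boundary (cellQ1 Q2)"
    and mu1_pos: "\<mu>1 > 0"
    and well_posed: "\<And>z j. z \<notin> complex_of_real ` {..0} \<Longrightarrow> \<exists>u. cell_sol \<mu>1 Q2 z j u"
  shows "(\<forall>z. Im z \<noteq> 0 \<longrightarrow>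
            neg_semidef (\<chi> i j. (Kmat \<mu>1 Q2 z $ i $ j - adjoint_mat (Kmat \<mu>1 Q2 z) $ i $ j) / (z - cnj z)))
       \<and> (\<forall>x::real. x > 0 \<longrightarrow> pos_semidef (Kmat \<mu>1 Q2 (complex_of_real x)))"
proof (intro conjI allI impI)
  \<comment> \<open>The geometric hypotheses only serve to make the cell problem well posed, which
    \<open>well_posed\<close> provides directly.\<close>
  fix z :: complex
  assume z: "Im z \<noteq> 0"
  then have "z \<notin> complex_of_real ` {..0}" by auto
  then obtain A B where A: "pos_semidef A" and B: "pos_semidef B"
    and K: "Kmat \<mu>1 Q2 z = (\<chi> i j. of_real (2 * \<mu>1) * (A $ i $ j + cnj z * B $ i $ j))"
    using Kmat_decomposition[OF Q2_open Q2_closure well_posed] by blast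
  have hA: "hermitian_mat A" and hB: "hermitian_mat B"
    using A B unfolding pos_semidef_def by blast+
  show "neg_semidef (\<chi> i j. (Kmat \<mu>1 Q2 z $ i $ j - adjoint_mat (Kmat \<mu>1 Q2 z) $ i $ j) / (z - cnj z))"
    unfolding K adjoint_difference_quotient[OF hA hB z]
    using mu1_pos by (intro neg_semidef_neg_mult[OF B]) simp
next
  fix x :: real
  assume x: "x > 0"
  then have "complex_of_real x \<notin> complex_of_real ` {..0}" by auto
  then obtain A B where A: "pos_semidef A" and B: "pos_semidef B"
    and K: "Kmat \<mu>1 Q2 x = (\<chi> i j. of_real (2 * \<mu>1) * (A $ i $ j + cnj (of_real x) * B $ i $ j))"
    using Kmat_decomposition[OF Q2_open Q2_closure well_posed] by blast
  have K': "Kmat \<mu>1 Q2 x = (\<chi> i j. of_real (2 * \<mu>1) * A $ i $ j + of_real (2 * \<mu>1 * x) * B $ i $ j)"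
    unfolding K by (simp add: vec_eq_iff algebra_simps)
  show "pos_semidef (Kmat \<mu>1 Q2 x)"
    unfolding K' using mu1_pos x by (intro pos_semidef_lincomb[OF A B]) simp_all
qed

end
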